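(* Let $d\geqslant 2$ and $k\geqslant 1$ be integers and let $a\in\mathbb{Z}_p$. Then (1) $L^d(a)$ is self-similar of index $p^k$, and (2) $L^d(a)$ is strongly hereditarily self-similar of index $p^k$.
   Context: $p$ is any prime. For $d\geqslant 2$ and $a\in\mathbb{Z}_p$, $L^d(a)$ is the $\mathbb{Z}_p$-Lie lattice $\mathbb{Z}_p^d$ with canonical basis $(x_0,\dots,x_{d-1})$ and bracket determined by $[x_i,x_j]=0$ and $[x_0,x_i]=ax_i$ for $i,j\in\{1,\dots,d-1\}$. A virtual endomorphism of a $\mathbb{Z}_p$-Lie lattice $L$ is a homomorphism of algebras $\varphi:M\to L$ with $M\subseteq L$ a finite-index subalgebra, of index $[L:M]$. An ideal $I$ of $L$ is $\varphi$-invariant if it lies in the domain of every power of $\varphi$ and $\varphi(I)\subseteq I$; $\varphi$ is simple if no non-zero ideal is $\varphi$-invariant. $L$ is self-similar of index $p^k$ if it has a simple virtual endomorphism of index $p^k$; it is strongly hereditarily self-similar of index $p^k$ if it is self-similar of index $p^k$ and every non-zero subalgebra of $L$ is self-similar of index $p^k$. *)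

theory Defs
  imports Main "HOL-Computational_Algebra.Primes"
begin

section \<open>The p-adic integers as compatible sequences of residues\<close>

type_synonym zp = "nat \<Rightarrow> int"

definition Zp :: "nat \<Rightarrow> zp set" where
  "Zp p = {x. \<forall>n. 0 \<le> x n \<and> x n < int p ^ n \<and> x (Suc n) mod (int p ^ n) = x n}"

definition zp_zero :: zp where "zp_zero = (\<lambda>n. 0)"
definition zp_add :: "nat \<Rightarrow> zp \<Rightarrow> zp \<Rightarrow> zp" where
  "zp_add p x y = (\<lambda>n. (x n + y n) mod (int p ^ n))"
definition zp_neg :: "nat \<Rightarrow> zp \<Rightarrow> zp" where
  "zp_neg p x = (\<lambda>n. (- x n) mod (int p ^ n))"
definition zp_mul :: "nat \<Rightarrow> zp \<Rightarrow> zp \<Rightarrow> zp" where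
  "zp_mul p x y = (\<lambda>n. (x n * y n) mod (int p ^ n))"

type_synonym zvec = "nat \<Rightarrow> zp"

definition Vd :: "nat \<Rightarrow> nat \<Rightarrow> zvec set" where
  "Vd p d = {v. (\<forall>i<d. v i \<in> Zp p) \<and> (\<forall>i\<ge>d. v i = zp_zero)}"

definition vzero :: zvec where "vzero = (\<lambda>i. zp_zero)"
definition vadd :: "nat \<Rightarrow> zvec \<Rightarrow> zvec \<Rightarrow> zvec" where
  "vadd p v w = (\<lambda>i. zp_add p (v i) (w i))"
definition vsub :: "nat \<Rightarrow> zvec \<Rightarrow> zvec \<Rightarrow> zvec" where
  "vsub p v w = (\<lambda>i. zp_add p (v i) (zp_neg p (w i)))"
definition vsmul :: "nat \<Rightarrow> zp \<Rightarrow> zvec \<Rightarrow> zvec" where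
  "vsmul p c v = (\<lambda>i. zp_mul p c (v i))"

text \<open>Bracket of L^d(a): bilinear extension of [x_i,x_j]=0, [x_0,x_i]=a x_i (i,j \<ge> 1),
  i.e. [u,v] = a * sum_{i>=1} (u_0 v_i - v_0 u_i) x_i.\<close>
definition Ld_br :: "nat \<Rightarrow> zp \<Rightarrow> zvec \<Rightarrow> zvec \<Rightarrow> zvec" where
  "Ld_br p a u v = (\<lambda>i. if 1 \<le> i
      then zp_mul p a (zp_add p (zp_mul p (u 0) (v i)) (zp_neg p (zp_mul p (v 0) (u i))))
      else zp_zero)"

definition submod :: "nat \<Rightarrow> nat \<Rightarrow> zvec set \<Rightarrow> bool" where
  "submod p d S \<longleftrightarrow> S \<subseteq> Vd p d \<and> vzero \<in> S \<and>
     (\<forall>u\<in>S. \<forall>v\<in>S. vadd p u v \<in> S) \<and> (\<forall>c\<in>Zp p. \<forall>u\<in>S. vsmul p c u \<in> S)"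

definition subalg :: "nat \<Rightarrow> nat \<Rightarrow> (zvec \<Rightarrow> zvec \<Rightarrow> zvec) \<Rightarrow> zvec set \<Rightarrow> zvec set \<Rightarrow> bool" where
  "subalg p d br H S \<longleftrightarrow> submod p d S \<and> S \<subseteq> H \<and> (\<forall>u\<in>S. \<forall>v\<in>S. br u v \<in> S)"

definition lie_ideal :: "nat \<Rightarrow> nat \<Rightarrow> (zvec \<Rightarrow> zvec \<Rightarrow> zvec) \<Rightarrow> zvec set \<Rightarrow> zvec set \<Rightarrow> bool" where
  "lie_ideal p d br H I \<longleftrightarrow> submod p d I \<and> I \<subseteq> H \<and> (\<forall>h\<in>H. \<forall>x\<in>I. br h x \<in> I)"

definition lat_index :: "nat \<Rightarrow> zvec set \<Rightarrow> zvec set \<Rightarrow> nat" where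
  "lat_index p H M = card (H // {(u,v). u \<in> H \<and> v \<in> H \<and> vsub p u v \<in> M})"

definition finite_index :: "nat \<Rightarrow> zvec set \<Rightarrow> zvec set \<Rightarrow> bool" where
  "finite_index p H M \<longleftrightarrow> finite (H // {(u,v). u \<in> H \<and> v \<in> H \<and> vsub p u v \<in> M})"

definition virt_endo :: "nat \<Rightarrow> nat \<Rightarrow> (zvec \<Rightarrow> zvec \<Rightarrow> zvec) \<Rightarrow> zvec set \<Rightarrow> zvec set
     \<Rightarrow> (zvec \<Rightarrow> zvec) \<Rightarrow> bool" where
  "virt_endo p d br H M \<phi> \<longleftrightarrow> subalg p d br H M \<and> finite_index p H M \<and> \<phi> ` M \<subseteq> H \<and>
     (\<forall>u\<in>M. \<forall>v\<in>M. \<phi> (vadd p u v) = vadd p (\<phi> u) (\<phi> v)) \<and>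
     (\<forall>c\<in>Zp p. \<forall>u\<in>M. \<phi> (vsmul p c u) = vsmul p c (\<phi> u)) \<and>
     (\<forall>u\<in>M. \<forall>v\<in>M. \<phi> (br u v) = br (\<phi> u) (\<phi> v))"

fun pow_dom :: "zvec set \<Rightarrow> zvec set \<Rightarrow> (zvec \<Rightarrow> zvec) \<Rightarrow> nat \<Rightarrow> zvec set" where
  "pow_dom H M \<phi> 0 = H"
| "pow_dom H M \<phi> (Suc n) = {x \<in> M. \<phi> x \<in> pow_dom H M \<phi> n}"

definition phi_invariant :: "zvec set \<Rightarrow> zvec set \<Rightarrow> (zvec \<Rightarrow> zvec) \<Rightarrow> zvec set \<Rightarrow> bool" where
  "phi_invariant H M \<phi> I \<longleftrightarrow> (\<forall>n. I \<subseteq> pow_dom H M \<phi> n) \<and> \<phi> ` I \<subseteq> I"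

definition simple_ve :: "nat \<Rightarrow> nat \<Rightarrow> (zvec \<Rightarrow> zvec \<Rightarrow> zvec) \<Rightarrow> zvec set \<Rightarrow> zvec set
     \<Rightarrow> (zvec \<Rightarrow> zvec) \<Rightarrow> bool" where
  "simple_ve p d br H M \<phi> \<longleftrightarrow>
     (\<forall>I. lie_ideal p d br H I \<and> I \<noteq> {vzero} \<longrightarrow> \<not> phi_invariant H M \<phi> I)"

definition self_similar :: "nat \<Rightarrow> nat \<Rightarrow> (zvec \<Rightarrow> zvec \<Rightarrow> zvec) \<Rightarrow> zvec set \<Rightarrow> nat \<Rightarrow> bool" where
  "self_similar p d br H k \<longleftrightarrow>
     (\<exists>M \<phi>. virt_endo p d br H M \<phi> \<and> lat_index p H M = p ^ k \<and> simple_ve p d br H M \<phi>)"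

definition strongly_hered_self_similar ::
    "nat \<Rightarrow> nat \<Rightarrow> (zvec \<Rightarrow> zvec \<Rightarrow> zvec) \<Rightarrow> zvec set \<Rightarrow> nat \<Rightarrow> bool" where
  "strongly_hered_self_similar p d br H k \<longleftrightarrow> self_similar p d br H k \<and>
     (\<forall>S. subalg p d br H S \<and> S \<noteq> {vzero} \<longrightarrow> self_similar p d br S k)"

end

(* Every non-zero subalgebra S of L^d(a) has an echelon basis b_0, ..., b_(r-1), in which only b_0
   has a non-zero x_0-coordinate; it is found by Gaussian elimination over the discrete valuation
   ring Z_p, always pivoting on a coordinate of least valuation. In this basis S is isomorphic to
   L^r(c) with c = a b_0(0), and self-similarity is transported along isomorphisms, so it suffices
   to show that every L^r(c) is self-similar of index p^k.

   Fix a coordinate j, let M be the sublattice of index p^k of vectors whose j-th coordinate is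
   divisible by p^k, and let phi : M -> Z_p^r delete the j-th coordinate, shift the later ones
   down and append the j-th coordinate divided by p^k. If L^r(c) is abelian take j = 0; otherwise
   take j = 1, where phi is a Lie homomorphism because the bracket only multiplies by coordinate 0,
   which phi fixes. A vector v in the domain of every power of phi whose coordinates below j vanish
   is zero: its coordinates j, ..., r - 1 are divisible by p^k, and after r - j applications of
   phi they are divided by p^k, so by induction they are divisible by every power of p. Every
   non-zero ideal contains a non-zero such v (for j = 1 bracket with x_0 or x_1), so phi is
   simple. *)

theory Submission
  imports Defs
begin

section \<open>Arithmetic in Z_p\<close>

lemma Zp_range: "x \<in> Zp p \<Longrightarrow> 0 \<le> x n \<and> x n < int p ^ n"
  by (simp add: Zp_def)

lemma Zp_at_0: "x \<in> Zp p \<Longrightarrow> x 0 = 0"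
  using Zp_range[of x p 0] by simp

lemma Zp_mod: "x \<in> Zp p \<Longrightarrow> x n mod int p ^ n = x n"
  by (simp add: Zp_def)

lemma Zp_Suc_mod: "x \<in> Zp p \<Longrightarrow> x (Suc n) mod int p ^ n = x n"
  by (simp add: Zp_def)

lemma mod_pow_mod: "m \<le> n \<Longrightarrow> (a::int) mod int p ^ n mod int p ^ m = a mod int p ^ m"
  by (simp add: mod_mod_cancel le_imp_power_dvd)

lemma Zp_mod_le:
  assumes "x \<in> Zp p" "m \<le> n"
  shows "x n mod int p ^ m = x m"
  using assms(2)
proof (induction n rule: dec_induct)
  case base
  then show ?case using Zp_mod[OF assms(1)] .
next
  case (step n)
  have "x (Suc n) mod int p ^ m = x (Suc n) mod int p ^ n mod int p ^ m"
    using step.hyps(1) by (simp add: mod_pow_mod)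
  then show ?case using step.IH Zp_Suc_mod[OF assms(1)] by simp
qed

lemma Zp_mod_seqI:
  assumes "p > 0" and "\<And>n. f (Suc n) mod int p ^ n = f n mod int p ^ n"
  shows "(\<lambda>n. f n mod int p ^ n) \<in> Zp p"
proof -
  have "f (Suc n) mod int p ^ Suc n mod int p ^ n = f n mod int p ^ n" for n
    using assms(2)[of n] mod_pow_mod[of n "Suc n" "f (Suc n)" p] by (simp del: power_Suc)
  then show ?thesis using assms(1) by (simp add: Zp_def)
qed

lemma Zp_eqI: "x \<in> Zp p \<Longrightarrow> y \<in> Zp p \<Longrightarrow> (\<And>n. x n mod int p ^ n = y n mod int p ^ n) \<Longrightarrow> x = y"
  by (rule ext) (metis Zp_mod)

definition zp_int :: "nat \<Rightarrow> int \<Rightarrow> zp" where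
  "zp_int p z = (\<lambda>n. z mod int p ^ n)"

lemma zp_int_Zp: "p > 0 \<Longrightarrow> zp_int p z \<in> Zp p"
  unfolding zp_int_def by (rule Zp_mod_seqI) auto

lemma zp_zero_Zp: "p > 0 \<Longrightarrow> zp_zero \<in> Zp p"
  by (simp add: Zp_def zp_zero_def)

lemma zp_add_Zp:
  assumes "p > 0" "x \<in> Zp p" "y \<in> Zp p"
  shows "zp_add p x y \<in> Zp p"
  unfolding zp_add_def
proof (rule Zp_mod_seqI[OF assms(1)])
  fix n
  show "(x (Suc n) + y (Suc n)) mod int p ^ n = (x n + y n) mod int p ^ n"
    using mod_add_eq[of "x (Suc n)" "int p ^ n" "y (Suc n)"] by (simp add: Zp_Suc_mod assms)
qed

lemma zp_neg_Zp:
  assumes "p > 0" "x \<in> Zp p"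
  shows "zp_neg p x \<in> Zp p"
  unfolding zp_neg_def
proof (rule Zp_mod_seqI[OF assms(1)])
  fix n
  show "- x (Suc n) mod int p ^ n = - x n mod int p ^ n"
    using mod_minus_eq[of "x (Suc n)" "int p ^ n"] by (simp add: Zp_Suc_mod assms)
qed

lemma zp_mul_Zp:
  assumes "p > 0" "x \<in> Zp p" "y \<in> Zp p"
  shows "zp_mul p x y \<in> Zp p"
  unfolding zp_mul_def
proof (rule Zp_mod_seqI[OF assms(1)])
  fix n
  show "x (Suc n) * y (Suc n) mod int p ^ n = x n * y n mod int p ^ n"
    using mod_mult_eq[of "x (Suc n)" "int p ^ n" "y (Suc n)"] by (simp add: Zp_Suc_mod assms)
qed

lemma zp_mul_comm: "zp_mul p x y = zp_mul p y x"
  unfolding zp_mul_def by (simp add: mult.commute)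

lemma zp_mul_assoc: "zp_mul p (zp_mul p x y) z = zp_mul p x (zp_mul p y z)"
  unfolding zp_mul_def by (rule ext) (simp add: mod_simps mult.assoc)

lemma zp_int_1_mul: "x \<in> Zp p \<Longrightarrow> zp_mul p (zp_int p 1) x = x"
  unfolding zp_mul_def zp_int_def by (rule ext) (simp add: mod_simps Zp_mod)

lemma zp_mul_int_1: "x \<in> Zp p \<Longrightarrow> zp_mul p x (zp_int p 1) = x"
  by (subst zp_mul_comm) (rule zp_int_1_mul)

lemma zp_zero_mul: "zp_mul p zp_zero x = zp_zero"
  unfolding zp_mul_def zp_zero_def by simp

lemma zp_mul_zero: "zp_mul p x zp_zero = zp_zero"
  unfolding zp_mul_def zp_zero_def by simp

lemma zp_add_zero: "x \<in> Zp p \<Longrightarrow> zp_add p x zp_zero = x"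
  unfolding zp_add_def zp_zero_def by (rule ext) (simp add: Zp_mod)

lemma zp_zero_add: "x \<in> Zp p \<Longrightarrow> zp_add p zp_zero x = x"
  unfolding zp_add_def zp_zero_def by (rule ext) (simp add: Zp_mod)

lemma zp_neg_zero: "zp_neg p zp_zero = zp_zero"
  unfolding zp_neg_def zp_zero_def by simp

lemma zp_add_neg: "zp_add p x (zp_neg p x) = zp_zero"
  unfolding zp_add_def zp_neg_def zp_zero_def by (rule ext) (simp add: mod_simps)

lemma zp_neg_eq_zero_iff:
  assumes "x \<in> Zp p"
  shows "zp_neg p x = zp_zero \<longleftrightarrow> x = zp_zero"
proof
  assume neg: "zp_neg p x = zp_zero"
  have "x n = 0" for n
  proof -
    have "(- x n) mod int p ^ n = 0" using fun_cong[OF neg, of n] by (simp add: zp_neg_def zp_zero_def)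
    then have "int p ^ n dvd x n" by (simp add: mod_eq_0_iff_dvd)
    then show ?thesis using Zp_mod[OF assms, of n] by (metis dvd_eq_mod_eq_0)
  qed
  then show "x = zp_zero" by (auto simp: zp_zero_def)
qed (simp add: zp_neg_zero)

lemma Zp_first_nonzero:
  assumes "x \<in> Zp p" "x \<noteq> zp_zero"
  obtains m where "x m = 0" "x (Suc m) \<noteq> 0"
proof -
  have "\<exists>m. x m = 0 \<and> x (Suc m) \<noteq> 0"
  proof (rule ccontr)
    assume "\<nexists>m. x m = 0 \<and> x (Suc m) \<noteq> 0"
    then have "x n = 0" for n by (induction n) (auto simp: Zp_at_0[OF assms(1)])
    then show False using assms(2) by (auto simp: zp_zero_def)
  qed
  then show ?thesis using that by blast
qed

lemma Zp_pow_dvd_iff: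
  assumes "x \<in> Zp p" "m \<le> n"
  shows "int p ^ m dvd x n \<longleftrightarrow> x m = 0"
  using Zp_mod_le[OF assms] by (simp add: dvd_eq_mod_eq_0)

lemma zp_mul_neq_zero:
  assumes "prime p" "x \<in> Zp p" "y \<in> Zp p" "x \<noteq> zp_zero" "y \<noteq> zp_zero"
  shows "zp_mul p x y \<noteq> zp_zero"
proof
  assume xy: "zp_mul p x y = zp_zero"
  obtain a where a: "x a = 0" "x (Suc a) \<noteq> 0" using Zp_first_nonzero[OF assms(2,4)] .
  obtain b where b: "y b = 0" "y (Suc b) \<noteq> 0" using Zp_first_nonzero[OF assms(3,5)] .
  define N where "N = Suc (a + b)"
  obtain s where s: "x N = int p ^ a * s" using Zp_pow_dvd_iff[OF assms(2), of a N] a N_def by auto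
  obtain t where t: "y N = int p ^ b * t" using Zp_pow_dvd_iff[OF assms(3), of b N] b N_def by auto
  have "\<not> int p dvd s"
    using Zp_pow_dvd_iff[OF assms(2), of "Suc a" N] a s N_def by (auto simp: mult_dvd_mono)
  moreover have "\<not> int p dvd t"
    using Zp_pow_dvd_iff[OF assms(3), of "Suc b" N] b t N_def by (auto simp: mult_dvd_mono)
  moreover have "int p ^ N dvd x N * y N"
    using fun_cong[OF xy, of N] by (simp add: zp_mul_def zp_zero_def mod_eq_0_iff_dvd)
  then have "int p ^ (a + b) * int p dvd int p ^ (a + b) * (s * t)"
    using s t by (simp add: N_def power_add ac_simps)
  then have "int p dvd s * t"
    using assms(1) by (subst (asm) dvd_times_left_cancel_iff) (auto simp: prime_gt_0_nat)
  ultimately show False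
    using assms(1) prime_dvd_mult_iff[of "int p"] by auto
qed

lemma zp_mul_right_cancel:
  assumes "prime p" "x \<in> Zp p" "x' \<in> Zp p" "y \<in> Zp p" "y \<noteq> zp_zero"
    and "zp_mul p x y = zp_mul p x' y"
  shows "x = x'"
proof -
  have p0: "p > 0" using assms(1) prime_gt_0_nat by blast
  define z where "z = zp_add p x (zp_neg p x')"
  have "zp_mul p z y = zp_add p (zp_mul p x y) (zp_neg p (zp_mul p x' y))"
    unfolding z_def zp_mul_def zp_add_def zp_neg_def by (rule ext) (simp add: mod_simps algebra_simps)
  then have "zp_mul p z y = zp_zero" using assms(6) by (simp add: zp_add_neg)
  then have "z = zp_zero"
    using zp_mul_neq_zero[OF assms(1) _ assms(4) _ assms(5)] zp_add_Zp[OF p0 assms(2) zp_neg_Zp[OF p0 assms(3)]]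
    unfolding z_def by blast
  then have "(x n - x' n) mod int p ^ n = 0" for n
    using fun_cong[of z zp_zero n] unfolding z_def zp_add_def zp_neg_def zp_zero_def
    by (simp add: mod_simps)
  then show ?thesis by (intro Zp_eqI[OF assms(2,3)]) (simp add: mod_eq_dvd_iff dvd_eq_mod_eq_0)
qed

definition zp_div_pow :: "nat \<Rightarrow> nat \<Rightarrow> zp \<Rightarrow> zp" where
  "zp_div_pow p k x = (\<lambda>n. x (n + k) div int p ^ k)"

lemma zp_div_pow_eq:
  assumes "x \<in> Zp p" "x k = 0"
  shows "x (n + k) = int p ^ k * zp_div_pow p k x n"
  using Zp_pow_dvd_iff[OF assms(1), of k "n + k"] assms(2) by (simp add: zp_div_pow_def)

lemma zp_div_pow_Zp:
  assumes "p > 0" "x \<in> Zp p" "x k = 0"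
  shows "zp_div_pow p k x \<in> Zp p"
proof -
  have pk: "int p ^ k > 0" using assms(1) by simp
  note e = zp_div_pow_eq[OF assms(2,3)]
  have "0 \<le> zp_div_pow p k x n \<and> zp_div_pow p k x n < int p ^ n" for n
    using Zp_range[OF assms(2), of "n + k"] e[of n] pk
    by (simp add: power_add zero_le_mult_iff mult.commute[of "int p ^ n"])
  moreover have "zp_div_pow p k x (Suc n) mod int p ^ n = zp_div_pow p k x n" for n
  proof -
    have "x (Suc n + k) mod int p ^ (n + k) = x (n + k)"
      using Zp_mod_le[OF assms(2), of "n + k" "Suc n + k"] by simp
    then have "int p ^ k * (zp_div_pow p k x (Suc n) mod int p ^ n) = int p ^ k * zp_div_pow p k x n"
      using e[of "Suc n"] e[of n] by (simp add: power_add mod_mult_mult1 ac_simps)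
    then show ?thesis using assms(1) by simp
  qed
  ultimately show ?thesis by (simp add: Zp_def)
qed

lemma zp_div_pow_mod_seq:
  assumes "p > 0" "e (n + k) = int p ^ k * e' n"
  shows "zp_div_pow p k (\<lambda>n. e n mod int p ^ n) n = e' n mod int p ^ n"
proof -
  have "e (n + k) mod int p ^ (n + k) = int p ^ k * (e' n mod int p ^ n)"
    using assms(2) by (simp add: power_add mod_mult_mult1 ac_simps)
  then show ?thesis using assms(1) by (simp add: zp_div_pow_def)
qed

lemma zp_div_pow_add:
  assumes "p > 0" "x \<in> Zp p" "x k = 0" "y \<in> Zp p" "y k = 0"
  shows "zp_div_pow p k (zp_add p x y) = zp_add p (zp_div_pow p k x) (zp_div_pow p k y)"
  unfolding zp_add_def
  by (rule ext, rule zp_div_pow_mod_seq[OF assms(1)])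
     (simp add: zp_div_pow_eq[OF assms(2,3)] zp_div_pow_eq[OF assms(4,5)] distrib_left)

lemma zp_div_pow_neg:
  assumes "p > 0" "x \<in> Zp p" "x k = 0"
  shows "zp_div_pow p k (zp_neg p x) = zp_neg p (zp_div_pow p k x)"
  unfolding zp_neg_def
  by (rule ext, rule zp_div_pow_mod_seq[OF assms(1)]) (simp add: zp_div_pow_eq[OF assms(2,3)])

lemma zp_div_pow_mul:
  assumes "p > 0" "x \<in> Zp p" "x k = 0" "c \<in> Zp p"
  shows "zp_div_pow p k (zp_mul p c x) = zp_mul p c (zp_div_pow p k x)"
proof (rule ext)
  fix n
  have "zp_div_pow p k (zp_mul p c x) n = c (n + k) * zp_div_pow p k x n mod int p ^ n"
    unfolding zp_mul_def by (rule zp_div_pow_mod_seq[OF assms(1)]) (simp add: zp_div_pow_eq[OF assms(2,3)])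
  also have "\<dots> = c n * zp_div_pow p k x n mod int p ^ n"
    using Zp_mod_le[OF assms(4), of n "n + k"] by (metis le_add1 mod_mult_left_eq)
  finally show "zp_div_pow p k (zp_mul p c x) n = zp_mul p c (zp_div_pow p k x) n"
    by (simp add: zp_mul_def)
qed

lemma zp_mul_div_pow:
  assumes "x \<in> Zp p" "x k = 0"
  shows "zp_mul p (zp_int p (int p ^ k)) (zp_div_pow p k x) = x"
proof (rule ext)
  fix n
  have "x n = x (n + k) mod int p ^ n" using Zp_mod_le[OF assms(1), of n "n + k"] by simp
  then show "zp_mul p (zp_int p (int p ^ k)) (zp_div_pow p k x) n = x n"
    unfolding zp_mul_def zp_int_def zp_div_pow_eq[OF assms] by (simp add: mod_simps)
qed

lemma zp_mul_left_commute: "zp_mul p x (zp_mul p y z) = zp_mul p y (zp_mul p x z)"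
  by (metis zp_mul_assoc zp_mul_comm)

definition zp_inv :: "nat \<Rightarrow> zp \<Rightarrow> zp" where
  "zp_inv p u = (\<lambda>n. SOME z. 0 \<le> z \<and> z < int p ^ n \<and> (u n * z) mod int p ^ n = 1 mod int p ^ n)"

lemma mod_inverse_unique:
  fixes m u z z' :: int
  assumes "0 \<le> z" "z < m" "0 \<le> z'" "z' < m" "(u * z) mod m = 1 mod m" "(u * z') mod m = 1 mod m"
  shows "z = z'"
proof -
  have "(z * (u * z')) mod m = z mod m" using assms(6) by (metis mod_mult_right_eq mult.right_neutral)
  moreover have "(z' * (u * z)) mod m = z' mod m" using assms(5) by (metis mod_mult_right_eq mult.right_neutral)
  ultimately have "z mod m = z' mod m" by (simp add: ac_simps)
  then show ?thesis using assms by simp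
qed

(* u 1 \<noteq> 0 means that p does not divide u, i.e. u is a unit. *)
lemma exists_mod_inverse:
  assumes "prime p" "u \<in> Zp p" "u 1 \<noteq> 0"
  shows "\<exists>z. 0 \<le> z \<and> z < int p ^ n \<and> (u n * z) mod int p ^ n = 1 mod int p ^ n"
proof (cases "n = 0")
  case False
  have "\<not> int p dvd u n" using Zp_pow_dvd_iff[OF assms(2), of 1 n] assms(3) False by simp
  then have "coprime (u n) (int p ^ n)"
    using assms(1) by (simp add: prime_imp_coprime coprime_commute)
  then obtain s t where st: "s * u n + t * int p ^ n = 1" using bezout_int[of "u n" "int p ^ n"] by auto
  have "u n * s = 1 - t * int p ^ n" using st by (simp add: algebra_simps)
  then have "(u n * (s mod int p ^ n)) mod int p ^ n = (1 - t * int p ^ n) mod int p ^ n"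
    by (simp add: mod_mult_right_eq)
  also have "\<dots> = 1 mod int p ^ n" by (simp add: mod_diff_eq[symmetric])
  finally show ?thesis using assms(1) prime_gt_0_nat[of p] by (intro exI[of _ "s mod int p ^ n"]) simp
qed (intro exI[of _ 0], simp)

lemma zp_inv:
  assumes "prime p" "u \<in> Zp p" "u 1 \<noteq> 0"
  shows "0 \<le> zp_inv p u n \<and> zp_inv p u n < int p ^ n \<and> (u n * zp_inv p u n) mod int p ^ n = 1 mod int p ^ n"
  unfolding zp_inv_def using someI_ex[OF exists_mod_inverse[OF assms, of n]] by simp

lemma zp_inv_Zp:
  assumes "prime p" "u \<in> Zp p" "u 1 \<noteq> 0"
  shows "zp_inv p u \<in> Zp p"
proof -
  have "zp_inv p u (Suc n) mod int p ^ n = zp_inv p u n" for n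
  proof (rule mod_inverse_unique)
    have "(u (Suc n) * zp_inv p u (Suc n)) mod int p ^ Suc n mod int p ^ n = 1 mod int p ^ Suc n mod int p ^ n"
      using zp_inv[OF assms, of "Suc n"] by simp
    then have "(u (Suc n) * zp_inv p u (Suc n)) mod int p ^ n = 1 mod int p ^ n"
      by (simp only: mod_pow_mod[OF le_SucI[OF order_refl]])
    then show "(u n * (zp_inv p u (Suc n) mod int p ^ n)) mod int p ^ n = 1 mod int p ^ n"
      using Zp_Suc_mod[OF assms(2), of n] by (metis mod_mult_eq mod_mod_trivial)
  qed (use zp_inv[OF assms] assms(1) prime_gt_0_nat[of p] in auto)
  then show ?thesis using zp_inv[OF assms] by (simp add: Zp_def)
qed

lemma zp_inv_mul:
  assumes "prime p" "u \<in> Zp p" "u 1 \<noteq> 0"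
  shows "zp_mul p (zp_inv p u) u = zp_int p 1"
  unfolding zp_mul_def zp_int_def using zp_inv[OF assms] by (auto simp: mult.commute)

lemma zp_exists_quotient:
  assumes "prime p" "x \<in> Zp p" "y \<in> Zp p" "y m = 0" "y (Suc m) \<noteq> 0" "x m = 0"
  obtains l where "l \<in> Zp p" "zp_mul p l y = x"
proof -
  have p0: "p > 0" using assms(1) prime_gt_0_nat by blast
  define u where "u = zp_div_pow p m y"
  define w where "w = zp_div_pow p m x"
  define q where "q = zp_int p (int p ^ m)"
  have uZ: "u \<in> Zp p" unfolding u_def by (rule zp_div_pow_Zp[OF p0 assms(3,4)])
  have u1: "u 1 \<noteq> 0" using zp_div_pow_eq[OF assms(3,4), of 1] assms(5) by (simp add: u_def)
  have wZ: "w \<in> Zp p" unfolding w_def by (rule zp_div_pow_Zp[OF p0 assms(2,6)])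
  have y: "y = zp_mul p q u" unfolding q_def u_def by (rule zp_mul_div_pow[OF assms(3,4), symmetric])
  have x: "x = zp_mul p q w" unfolding q_def w_def by (rule zp_mul_div_pow[OF assms(2,6), symmetric])
  define l where "l = zp_mul p w (zp_inv p u)"
  have "zp_mul p l y = zp_mul p (zp_mul p q w) (zp_mul p (zp_inv p u) u)"
    unfolding l_def y by (simp only: zp_mul_assoc zp_mul_comm zp_mul_left_commute)
  also have "\<dots> = x"
    unfolding zp_inv_mul[OF assms(1) uZ u1] by (metis x zp_mul_int_1 assms(2))
  finally show ?thesis using that zp_mul_Zp[OF p0 wZ zp_inv_Zp[OF assms(1) uZ u1]] l_def by blast
qed

section \<open>The lattices Z_p^d and their submodules\<close>

lemma Vd_Zp: "p > 0 \<Longrightarrow> v \<in> Vd p d \<Longrightarrow> v i \<in> Zp p"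
  unfolding Vd_def by (cases "i < d") (auto simp: zp_zero_Zp)

lemma Vd_beyond: "v \<in> Vd p d \<Longrightarrow> d \<le> i \<Longrightarrow> v i = zp_zero"
  by (simp add: Vd_def)

lemma vzero_Vd: "p > 0 \<Longrightarrow> vzero \<in> Vd p d"
  by (simp add: Vd_def vzero_def zp_zero_Zp)

lemma vadd_Vd: "p > 0 \<Longrightarrow> u \<in> Vd p d \<Longrightarrow> v \<in> Vd p d \<Longrightarrow> vadd p u v \<in> Vd p d"
  unfolding Vd_def vadd_def by (auto simp: zp_add_Zp) (simp add: zp_add_def zp_zero_def)

lemma vsmul_Vd: "p > 0 \<Longrightarrow> c \<in> Zp p \<Longrightarrow> v \<in> Vd p d \<Longrightarrow> vsmul p c v \<in> Vd p d"
  unfolding Vd_def vsmul_def by (auto simp: zp_mul_Zp zp_mul_zero)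

lemma vsub_Vd: "p > 0 \<Longrightarrow> u \<in> Vd p d \<Longrightarrow> v \<in> Vd p d \<Longrightarrow> vsub p u v \<in> Vd p d"
  unfolding Vd_def vsub_def by (auto simp: zp_add_Zp zp_neg_Zp) (simp add: zp_add_def zp_neg_def zp_zero_def)

lemma Vd_mod: "v \<in> Vd p d \<Longrightarrow> v i n mod int p ^ n = v i n"
  unfolding Vd_def by (cases "i < d") (auto simp: Zp_mod zp_zero_def)

lemma Vd_eqI: "u \<in> Vd p d \<Longrightarrow> v \<in> Vd p d \<Longrightarrow> (\<And>i n. u i n mod int p ^ n = v i n mod int p ^ n) \<Longrightarrow> u = v"
  by (intro ext) (metis Vd_mod)

lemma Vd_0: "Vd p 0 = {vzero}"
  unfolding Vd_def vzero_def by auto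

lemma Vd_SucD: "l \<in> Vd p (Suc r) \<Longrightarrow> l 0 \<in> Zp p \<and> l \<circ> Suc \<in> Vd p r"
  unfolding Vd_def by auto

lemma Vd_SucI: "c \<in> Zp p \<Longrightarrow> m \<in> Vd p r \<Longrightarrow> case_nat c m \<in> Vd p (Suc r)"
  unfolding Vd_def by (auto split: nat.splits)

lemma vsub_eq_vadd_vsmul: "vsub p u v = vadd p u (vsmul p (zp_int p (-1)) v)"
  unfolding vsub_def vadd_def vsmul_def zp_add_def zp_neg_def zp_mul_def zp_int_def
  by (intro ext) (simp add: mod_simps)

lemma vsmul_zp_zero: "vsmul p zp_zero v = vzero"
  by (simp add: vsmul_def vzero_def zp_zero_mul)

lemma vadd_vsub: "v \<in> Vd p d \<Longrightarrow> vadd p u (vsub p v u) = v"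
  unfolding vadd_def vsub_def zp_add_def zp_neg_def
  by (intro ext) (simp add: mod_simps Vd_mod)

lemma vadd_left_cancel:
  assumes "u \<in> Vd p d" "v \<in> Vd p d" "vadd p w u = vadd p w v"
  shows "u = v"
proof (rule Vd_eqI[OF assms(1,2)])
  fix i n
  have "(w i n + u i n) mod int p ^ n = (w i n + v i n) mod int p ^ n"
    using fun_cong[OF fun_cong[OF assms(3), of i], of n] by (simp add: vadd_def zp_add_def)
  then show "u i n mod int p ^ n = v i n mod int p ^ n"
    by (metis add_diff_cancel_left' mod_diff_left_eq)
qed

lemma submod_Vd: "submod p d S \<Longrightarrow> v \<in> S \<Longrightarrow> v \<in> Vd p d"
  unfolding submod_def by auto

lemma submod_vsub: "p > 0 \<Longrightarrow> submod p d S \<Longrightarrow> u \<in> S \<Longrightarrow> v \<in> S \<Longrightarrow> vsub p u v \<in> S"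
  unfolding vsub_eq_vadd_vsmul submod_def using zp_int_Zp by blast

lemma submod_coord_zero: "submod p d S \<Longrightarrow> submod p d {v \<in> S. v j = zp_zero}"
  unfolding submod_def
  by (auto simp: vzero_def vadd_def vsmul_def zp_mul_zero) (simp add: zp_add_def zp_zero_def)

definition lincomb :: "nat \<Rightarrow> zvec list \<Rightarrow> zvec \<Rightarrow> zvec" where
  "lincomb p bs l = (\<lambda>i n. (\<Sum>t<length bs. l t n * (bs ! t) i n) mod int p ^ n)"

lemma sum_mod_cong:
  "(\<And>t. t \<in> A \<Longrightarrow> f t mod (m::int) = g t mod m) \<Longrightarrow> (\<Sum>t\<in>A. f t) mod m = (\<Sum>t\<in>A. g t) mod m"
  by (metis (no_types, lifting) mod_sum_eq sum.cong)

lemma lincomb_Nil: "lincomb p [] l = vzero"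
  unfolding lincomb_def vzero_def zp_zero_def by simp

lemma lincomb_Cons: "lincomb p (s # bs) l = vadd p (vsmul p (l 0) s) (lincomb p bs (l \<circ> Suc))"
  unfolding lincomb_def vadd_def vsmul_def zp_add_def zp_mul_def
  by (intro ext) (simp only: length_Cons sum.lessThan_Suc_shift, simp add: mod_simps)

lemma lincomb_vadd: "lincomb p bs (vadd p l m) = vadd p (lincomb p bs l) (lincomb p bs m)"
proof (intro ext)
  fix i n
  have "(\<Sum>t<length bs. vadd p l m t n * (bs ! t) i n) mod int p ^ n
      = (\<Sum>t<length bs. (l t n + m t n) * (bs ! t) i n) mod int p ^ n"
    by (rule sum_mod_cong) (simp add: vadd_def zp_add_def mod_simps)
  then show "lincomb p bs (vadd p l m) i n = vadd p (lincomb p bs l) (lincomb p bs m) i n"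
    unfolding lincomb_def vadd_def zp_add_def by (simp add: mod_simps distrib_right sum.distrib)
qed

lemma lincomb_vsmul: "lincomb p bs (vsmul p c l) = vsmul p c (lincomb p bs l)"
proof (intro ext)
  fix i n
  have "(\<Sum>t<length bs. vsmul p c l t n * (bs ! t) i n) mod int p ^ n
      = (\<Sum>t<length bs. c n * (l t n * (bs ! t) i n)) mod int p ^ n"
    by (rule sum_mod_cong) (simp add: vsmul_def zp_mul_def mod_simps ac_simps)
  then show "lincomb p bs (vsmul p c l) i n = vsmul p c (lincomb p bs l) i n"
    unfolding lincomb_def vsmul_def zp_mul_def by (simp add: mod_simps sum_distrib_left)
qed

lemma lincomb_Cons_coord:
  assumes "\<And>t. t < length bs \<Longrightarrow> (bs ! t) j = zp_zero"
  shows "lincomb p (s # bs) l j = zp_mul p (l 0) (s j)"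
proof -
  have "lincomb p bs (l \<circ> Suc) j = zp_zero"
    using assms unfolding lincomb_def zp_zero_def by (intro ext) simp
  then show ?thesis
    unfolding lincomb_Cons by (simp add: vadd_def vsmul_def zp_add_def zp_mul_def zp_zero_def)
qed

definition basis_of :: "nat \<Rightarrow> zvec list \<Rightarrow> zvec set \<Rightarrow> bool" where
  "basis_of p bs S \<longleftrightarrow> set bs \<subseteq> S \<and> bij_betw (lincomb p bs) (Vd p (length bs)) S"

lemma inj_on_lincomb_Cons:
  assumes pr: "prime p" and sj: "s j \<in> Zp p" "s j \<noteq> zp_zero"
    and bsj: "\<forall>t<length bs. (bs ! t) j = zp_zero"
    and inj: "inj_on (lincomb p bs) (Vd p (length bs))"
    and lcV: "\<And>l. l \<in> Vd p (length bs) \<Longrightarrow> lincomb p bs l \<in> Vd p d"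
  shows "inj_on (lincomb p (s # bs)) (Vd p (Suc (length bs)))"
proof (rule inj_onI)
  fix l l' assume l: "l \<in> Vd p (Suc (length bs))" and l': "l' \<in> Vd p (Suc (length bs))"
    and eq: "lincomb p (s # bs) l = lincomb p (s # bs) l'"
  note L = Vd_SucD[OF l] and L' = Vd_SucD[OF l']
  have "zp_mul p (l 0) (s j) = zp_mul p (l' 0) (s j)"
    using eq lincomb_Cons_coord[of bs j, OF bsj[rule_format]] by metis
  then have l0: "l 0 = l' 0" using zp_mul_right_cancel[OF pr _ _ sj] L L' by blast
  have "lincomb p bs (l \<circ> Suc) = lincomb p bs (l' \<circ> Suc)"
    using vadd_left_cancel[OF lcV lcV] L L' eq unfolding lincomb_Cons l0 by blast
  then have "l \<circ> Suc = l' \<circ> Suc" using inj L L' by (auto dest: inj_onD)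
  then show "l = l'" using l0 by (metis (no_types, lifting) comp_apply ext not0_implies_Suc)
qed

(* s j has valuation exactly m, the least valuation of a j-th coordinate of a vector in S. *)
lemma basis_of_Cons:
  assumes pr: "prime p" and S: "submod p d S" and sS: "s \<in> S" and jd: "j < d"
    and sm: "s j m = 0" "s j (Suc m) \<noteq> 0" and min: "\<forall>v\<in>S. v j m = 0"
    and bs: "basis_of p bs {v \<in> S. v j = zp_zero}"
  shows "basis_of p (s # bs) S"
proof -
  have p0: "p > 0" using pr prime_gt_0_nat by blast
  have bsS: "set bs \<subseteq> {v \<in> S. v j = zp_zero}"
    and bij: "bij_betw (lincomb p bs) (Vd p (length bs)) {v \<in> S. v j = zp_zero}"
    using bs by (auto simp: basis_of_def)
  have sj: "s j \<in> Zp p" using Vd_Zp[OF p0 submod_Vd[OF S sS]] .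
  have sj0: "s j \<noteq> zp_zero" using sm(2) by (auto simp: zp_zero_def)
  have bsj: "\<forall>t<length bs. (bs ! t) j = zp_zero" using bsS nth_mem by blast
  have lcS: "lincomb p bs l \<in> S" "lincomb p bs l \<in> Vd p d" if "l \<in> Vd p (length bs)" for l
    using bij_betw_apply[OF bij that] S by (auto dest: submod_Vd)
  have into: "lincomb p (s # bs) l \<in> S" if "l \<in> Vd p (Suc (length bs))" for l
    using Vd_SucD[OF that] lcS(1) S sS unfolding lincomb_Cons submod_def by blast
  have inj: "inj_on (lincomb p (s # bs)) (Vd p (Suc (length bs)))"
    using inj_on_lincomb_Cons[of p s j, OF pr sj sj0 bsj bij_betw_imp_inj_on[OF bij] lcS(2)] .
  have onto: "v \<in> lincomb p (s # bs) ` Vd p (Suc (length bs))" if vS: "v \<in> S" for v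
  proof -
    have vV: "v \<in> Vd p d" using S vS by (rule submod_Vd)
    obtain c where c: "c \<in> Zp p" "zp_mul p c (s j) = v j"
      using zp_exists_quotient[OF pr Vd_Zp[OF p0 vV] sj sm] min vS by blast
    define w where "w = vsub p v (vsmul p c s)"
    have "w \<in> S" unfolding w_def using S vS sS c p0 by (intro submod_vsub) (auto simp: submod_def)
    moreover have "w j = zp_zero" by (simp add: w_def vsub_def vsmul_def c(2) zp_add_neg)
    ultimately obtain \<mu> where \<mu>: "\<mu> \<in> Vd p (length bs)" "lincomb p bs \<mu> = w"
      using bij unfolding bij_betw_def by (metis (mono_tags, lifting) imageE mem_Collect_eq)
    have "lincomb p (s # bs) (case_nat c \<mu>) = v"
      unfolding lincomb_Cons by (simp add: \<mu>(2) comp_def w_def vadd_vsub[OF vV])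
    then show ?thesis using Vd_SucI[OF c(1) \<mu>(1)] by (metis image_eqI)
  qed
  show ?thesis using inj into onto sS bsS unfolding basis_of_def bij_betw_def by auto
qed

lemma submod_min_valuation:
  assumes S: "submod p d S" and "j < d" and "v \<in> S" "v j \<noteq> zp_zero"
  obtains s m where "s \<in> S" "s j m = 0" "s j (Suc m) \<noteq> 0" "\<forall>w\<in>S. w j m = 0"
proof -
  have Z: "w j \<in> Zp p" if "w \<in> S" for w
    using submod_Vd[OF S that] \<open>j < d\<close> by (simp add: Vd_def)
  obtain n where n: "v j n \<noteq> 0" using assms(4) by (auto simp: zp_zero_def)
  then obtain n' where "n = Suc n'" using Zp_at_0[OF Z[OF \<open>v \<in> S\<close>]] by (cases n) auto
  then have ex: "\<exists>m. \<exists>s\<in>S. s j (Suc m) \<noteq> 0" using n \<open>v \<in> S\<close> by blast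
  define m where "m = (LEAST m. \<exists>s\<in>S. s j (Suc m) \<noteq> 0)"
  obtain s where "s \<in> S" "s j (Suc m) \<noteq> 0" using LeastI_ex[OF ex] unfolding m_def by blast
  moreover have "w j m = 0" if "w \<in> S" for w
  proof (cases m)
    case (Suc m')
    then have "m' < m" by simp
    then have "\<not> (\<exists>s\<in>S. s j (Suc m') \<noteq> 0)" unfolding m_def by (rule not_less_Least)
    then show ?thesis using that Suc by auto
  qed (use Zp_at_0[OF Z[OF that]] in simp)
  ultimately show ?thesis using that[of s m] by blast
qed

lemma submod_eq_singleton_vzero:
  assumes "submod p d S" "\<forall>v\<in>S. \<forall>i<d. v i = zp_zero"
  shows "S = {vzero}"
proof
  show "S \<subseteq> {vzero}"
  proof
    fix v assume "v \<in> S"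
    then have "v i = zp_zero" for i
      using assms Vd_beyond[OF submod_Vd] by (cases "i < d") (auto simp: not_less)
    then show "v \<in> {vzero}" by (auto simp: vzero_def)
  qed
  show "{vzero} \<subseteq> S" using assms(1) by (auto simp: submod_def)
qed

lemma submod_echelon_basis:
  assumes pr: "prime p" and "j \<le> d"
  shows "submod p d S \<Longrightarrow> \<forall>v\<in>S. \<forall>i<j. v i = zp_zero \<Longrightarrow>
    \<exists>bs. basis_of p bs S \<and> (\<forall>t. 1 \<le> t \<and> t < length bs \<longrightarrow> (bs ! t) j = zp_zero)"
  using assms(2)
proof (induction j arbitrary: S rule: inc_induct)
  case base
  then have "S = {vzero}" by (rule submod_eq_singleton_vzero)
  then show ?case by (intro exI[of _ "[]"]) (auto simp: basis_of_def lincomb_Nil Vd_0 bij_betw_def)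
next
  case (step j)
  let ?S' = "{v \<in> S. v j = zp_zero}"
  have low: "\<forall>v\<in>?S'. \<forall>i<Suc j. v i = zp_zero" using step.prems(2) less_Suc_eq by auto
  show ?case
  proof (cases "\<forall>v\<in>S. v j = zp_zero")
    case True
    then have "?S' = S" by blast
    then obtain bs where "basis_of p bs S" using step.IH[OF submod_coord_zero[OF step.prems(1)] low] by auto
    then show ?thesis using True nth_mem unfolding basis_of_def by blast
  next
    case False
    then obtain v where "v \<in> S" "v j \<noteq> zp_zero" by blast
    then obtain s m where s: "s \<in> S" "s j m = 0" "s j (Suc m) \<noteq> 0" "\<forall>w\<in>S. w j m = 0"
      using submod_min_valuation[OF step.prems(1) step.hyps(2)] by metis
    obtain bs where bs: "basis_of p bs ?S'"
      using step.IH[OF submod_coord_zero[OF step.prems(1)] low] by blast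
    have "basis_of p (s # bs) S" by (rule basis_of_Cons[OF pr step.prems(1) s(1) step.hyps(2) s(2-4) bs])
    moreover have "((s # bs) ! t) j = zp_zero" if "1 \<le> t" "t < length (s # bs)" for t
    proof -
      obtain t' where t: "t = Suc t'" using \<open>1 \<le> t\<close> not0_implies_Suc by fastforce
      then have "bs ! t' \<in> set bs" using that by simp
      then show ?thesis using bs t unfolding basis_of_def by auto
    qed
    ultimately show ?thesis by blast
  qed
qed

section \<open>Transport of self-similarity along isomorphisms\<close>

definition lie_iso :: "nat \<Rightarrow> (zvec \<Rightarrow> zvec \<Rightarrow> zvec) \<Rightarrow> zvec set \<Rightarrow> (zvec \<Rightarrow> zvec \<Rightarrow> zvec) \<Rightarrow> zvec set
    \<Rightarrow> (zvec \<Rightarrow> zvec) \<Rightarrow> bool" where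
  "lie_iso p br H br' H' f \<longleftrightarrow> bij_betw f H H' \<and>
     (\<forall>x\<in>H. \<forall>y\<in>H. f (vadd p x y) = vadd p (f x) (f y) \<and> f (br x y) = br' (f x) (f y)) \<and>
     (\<forall>c\<in>Zp p. \<forall>x\<in>H. f (vsmul p c x) = vsmul p c (f x))"

lemma lie_isoD:
  assumes "lie_iso p br H br' H' f"
  shows "x \<in> H \<Longrightarrow> f x \<in> H'"
    and "x \<in> H \<Longrightarrow> y \<in> H \<Longrightarrow> f (vadd p x y) = vadd p (f x) (f y)"
    and "x \<in> H \<Longrightarrow> y \<in> H \<Longrightarrow> f (br x y) = br' (f x) (f y)"
    and "c \<in> Zp p \<Longrightarrow> x \<in> H \<Longrightarrow> f (vsmul p c x) = vsmul p c (f x)"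
  using assms by (auto simp: lie_iso_def bij_betw_def)

lemma lie_iso_vzero:
  assumes "p > 0" "lie_iso p br (Vd p r) br' S f"
  shows "f vzero = vzero"
  using assms vzero_Vd[OF assms(1)] zp_zero_Zp[OF assms(1)]
  unfolding lie_iso_def by (metis vsmul_zp_zero)

lemma lie_iso_vsub:
  assumes "p > 0" "lie_iso p br (Vd p r) br' S f" "x \<in> Vd p r" "y \<in> Vd p r"
  shows "f (vsub p x y) = vsub p (f x) (f y)"
  using assms vsmul_Vd[OF assms(1) zp_int_Zp[OF assms(1)] assms(4)] zp_int_Zp[OF assms(1)]
  unfolding lie_iso_def vsub_eq_vadd_vsmul by metis

lemma bij_betw_quotient:
  assumes f: "bij_betw f A B" and R: "R \<subseteq> A \<times> A" and R': "R' \<subseteq> B \<times> B"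
    and RR: "\<And>u v. u \<in> A \<Longrightarrow> v \<in> A \<Longrightarrow> (u, v) \<in> R \<longleftrightarrow> (f u, f v) \<in> R'"
  shows "bij_betw (image f) (A // R) (B // R')"
proof -
  have inj: "inj_on f A" and im: "f ` A = B" using f by (auto simp: bij_betw_def)
  have cls: "f ` (R `` {x}) = R' `` {f x}" if "x \<in> A" for x
  proof
    show "f ` (R `` {x}) \<subseteq> R' `` {f x}" using RR that R by auto
    show "R' `` {f x} \<subseteq> f ` (R `` {x})"
    proof
      fix y assume "y \<in> R' `` {f x}"
      moreover from this obtain z where "z \<in> A" "y = f z" using R' im by auto
      ultimately show "y \<in> f ` (R `` {x})" using RR[OF that] by auto
    qed
  qed
  have "image f ` (A // R) = B // R'"
    unfolding quotient_def using cls im by auto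
  moreover have "inj_on (image f) (A // R)"
  proof (rule inj_onI)
    fix X Y assume "X \<in> A // R" "Y \<in> A // R" "f ` X = f ` Y"
    moreover have "X \<subseteq> A" "Y \<subseteq> A" using calculation(1,2) R unfolding quotient_def by auto
    ultimately show "X = Y" using inj_on_image_eq_iff[OF inj] by blast
  qed
  ultimately show ?thesis unfolding bij_betw_def by simp
qed

lemma lie_iso_quotient:
  assumes "p > 0" "lie_iso p br (Vd p r) br' S f" "M \<subseteq> Vd p r"
  shows "bij_betw (image f) (Vd p r // {(u, v). u \<in> Vd p r \<and> v \<in> Vd p r \<and> vsub p u v \<in> M})
    (S // {(u, v). u \<in> S \<and> v \<in> S \<and> vsub p u v \<in> f ` M})"
proof (rule bij_betw_quotient)
  have f: "bij_betw f (Vd p r) S" using assms(2) by (simp add: lie_iso_def)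
  then show "bij_betw f (Vd p r) S" .
  fix u v assume uv: "u \<in> Vd p r" "v \<in> Vd p r"
  have "vsub p (f u) (f v) \<in> f ` M \<longleftrightarrow> vsub p u v \<in> M"
    unfolding lie_iso_vsub[OF assms(1,2) uv, symmetric]
    using inj_on_image_mem_iff[OF bij_betw_imp_inj_on[OF f] vsub_Vd[OF assms(1) uv] assms(3)] .
  then show "(u, v) \<in> {(u, v). u \<in> Vd p r \<and> v \<in> Vd p r \<and> vsub p u v \<in> M} \<longleftrightarrow>
    (f u, f v) \<in> {(u, v). u \<in> S \<and> v \<in> S \<and> vsub p u v \<in> f ` M}"
    using uv bij_betw_apply[OF f] by auto
qed auto

lemma lie_iso_index:
  assumes "p > 0" "lie_iso p br (Vd p r) br' S f" "M \<subseteq> Vd p r"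
  shows "lat_index p S (f ` M) = lat_index p (Vd p r) M"
    and "finite_index p S (f ` M) \<longleftrightarrow> finite_index p (Vd p r) M"
  using bij_betw_same_card[OF lie_iso_quotient[OF assms]] bij_betw_finite[OF lie_iso_quotient[OF assms]]
  unfolding lat_index_def finite_index_def by simp_all

lemma lie_iso_subalg:
  assumes p0: "p > 0" and f: "lie_iso p br' (Vd p r) br S f" and S: "S \<subseteq> Vd p d"
    and M: "subalg p r br' (Vd p r) M"
  shows "subalg p d br S (f ` M)"
  unfolding subalg_def submod_def
proof (intro conjI ballI)
  have MV: "M \<subseteq> Vd p r" using M by (simp add: subalg_def)
  show "f ` M \<subseteq> S" using MV lie_isoD(1)[OF f] by blast
  then show "f ` M \<subseteq> Vd p d" using S by blast
  have "vzero \<in> M" using M by (simp add: subalg_def submod_def)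
  then show "vzero \<in> f ` M" using lie_iso_vzero[OF p0 f] by (metis image_eqI)
next
  fix u v assume "u \<in> f ` M" "v \<in> f ` M"
  then obtain x y where xy: "x \<in> M" "y \<in> M" and uv: "u = f x" "v = f y" by blast
  then have "x \<in> Vd p r" "y \<in> Vd p r" using M by (auto simp: subalg_def)
  then have "vadd p u v = f (vadd p x y)" "br u v = f (br' x y)" using lie_isoD[OF f] uv by simp_all
  moreover have "vadd p x y \<in> M" "br' x y \<in> M" using M xy by (auto simp: subalg_def submod_def)
  ultimately show "vadd p u v \<in> f ` M" "br u v \<in> f ` M" by simp_all
next
  fix c u assume c: "c \<in> Zp p" and "u \<in> f ` M"
  then obtain x where x: "x \<in> M" and u: "u = f x" by blast
  then have "vsmul p c u = f (vsmul p c x)" using lie_isoD(4)[OF f c] M by (auto simp: subalg_def)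
  moreover have "vsmul p c x \<in> M" using M x c by (auto simp: subalg_def submod_def)
  ultimately show "vsmul p c u \<in> f ` M" by simp
qed

lemma lie_iso_virt_endo:
  assumes p0: "p > 0" and f: "lie_iso p br' (Vd p r) br S f" and S: "S \<subseteq> Vd p d"
    and ve: "virt_endo p r br' (Vd p r) M \<phi>"
    and \<phi>: "\<And>x. x \<in> Vd p r \<Longrightarrow> \<psi> (f x) = f (\<phi> x)"
  shows "virt_endo p d br S (f ` M) \<psi>"
proof -
  have M: "subalg p r br' (Vd p r) M" "finite_index p (Vd p r) M" "\<phi> ` M \<subseteq> Vd p r"
    and add: "\<forall>u\<in>M. \<forall>v\<in>M. \<phi> (vadd p u v) = vadd p (\<phi> u) (\<phi> v)"
    and smul: "\<forall>c\<in>Zp p. \<forall>u\<in>M. \<phi> (vsmul p c u) = vsmul p c (\<phi> u)"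
    and br: "\<forall>u\<in>M. \<forall>v\<in>M. \<phi> (br' u v) = br' (\<phi> u) (\<phi> v)"
    using ve unfolding virt_endo_def by auto
  have MV: "M \<subseteq> Vd p r" and Mc: "\<And>x y. x \<in> M \<Longrightarrow> y \<in> M \<Longrightarrow> vadd p x y \<in> M \<and> br' x y \<in> M"
    "\<And>c x. c \<in> Zp p \<Longrightarrow> x \<in> M \<Longrightarrow> vsmul p c x \<in> M"
    using M(1) unfolding subalg_def submod_def by auto
  note fD = lie_isoD[OF f]
  show ?thesis
    unfolding virt_endo_def
  proof (intro conjI ballI lie_iso_subalg[OF p0 f S M(1)])
    show "finite_index p S (f ` M)" using lie_iso_index(2)[OF p0 f MV] M(2) by simp
    show "\<psi> ` f ` M \<subseteq> S" using M(3) MV \<phi> fD(1) by (auto simp: image_subset_iff subset_iff)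
  next
    fix u v assume "u \<in> f ` M" "v \<in> f ` M"
    then obtain x y where xy: "x \<in> M" "y \<in> M" and uv: "u = f x" "v = f y" by blast
    have V: "x \<in> Vd p r" "y \<in> Vd p r" "\<phi> x \<in> Vd p r" "\<phi> y \<in> Vd p r"
      "vadd p x y \<in> Vd p r" "br' x y \<in> Vd p r"
      using xy MV M(3) Mc(1)[OF xy] by auto
    show "\<psi> (vadd p u v) = vadd p (\<psi> u) (\<psi> v)"
      using add xy V \<phi> fD(2) unfolding uv by (simp add: fD(2)[symmetric])
    show "\<psi> (br u v) = br (\<psi> u) (\<psi> v)"
      using br xy V \<phi> unfolding uv by (simp add: fD(3)[symmetric])
  next
    fix c u assume c: "c \<in> Zp p" and "u \<in> f ` M"
    then obtain x where x: "x \<in> M" and u: "u = f x" by blast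
    have V: "x \<in> Vd p r" "\<phi> x \<in> Vd p r" "vsmul p c x \<in> Vd p r" using x MV M(3) Mc(2)[OF c x] by auto
    show "\<psi> (vsmul p c u) = vsmul p c (\<psi> u)"
      using smul c x V \<phi> unfolding u by (simp add: fD(4)[symmetric])
  qed
qed

lemma pow_dom_bij:
  assumes f: "bij_betw f H S" and "M \<subseteq> H" "\<phi> ` M \<subseteq> H"
    and \<phi>: "\<And>x. x \<in> H \<Longrightarrow> \<psi> (f x) = f (\<phi> x)" and "x \<in> H"
  shows "f x \<in> pow_dom S (f ` M) \<psi> n \<longleftrightarrow> x \<in> pow_dom H M \<phi> n"
  using \<open>x \<in> H\<close>
proof (induction n arbitrary: x)
  case 0
  then show ?case using f by (auto simp: bij_betw_def)
next
  case (Suc n)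
  have fM: "f x \<in> f ` M \<longleftrightarrow> x \<in> M"
    using inj_on_image_mem_iff[OF bij_betw_imp_inj_on[OF f] Suc.prems \<open>M \<subseteq> H\<close>] .
  show ?case
  proof (cases "x \<in> M")
    case True
    then have "\<phi> x \<in> H" using \<open>\<phi> ` M \<subseteq> H\<close> by auto
    then show ?thesis using Suc.IH[of "\<phi> x"] \<phi>[OF Suc.prems] fM True by simp
  qed (simp add: fM)
qed

lemma lie_iso_ideal_preimage:
  assumes p0: "p > 0" and f: "lie_iso p br' (Vd p r) br S f"
    and br': "\<And>x y. x \<in> Vd p r \<Longrightarrow> y \<in> Vd p r \<Longrightarrow> br' x y \<in> Vd p r"
    and I: "lie_ideal p d br S I"
  shows "lie_ideal p r br' (Vd p r) {x \<in> Vd p r. f x \<in> I}"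
  unfolding lie_ideal_def submod_def
proof (intro conjI ballI)
  have Isub: "submod p d I" and Ibr: "\<forall>h\<in>S. \<forall>x\<in>I. br h x \<in> I"
    using I unfolding lie_ideal_def by auto
  note fD = lie_isoD[OF f]
  show "vzero \<in> {x \<in> Vd p r. f x \<in> I}"
    using lie_iso_vzero[OF p0 f] Isub vzero_Vd[OF p0] by (simp add: submod_def)
  show "vadd p u v \<in> {x \<in> Vd p r. f x \<in> I}" if "u \<in> {x \<in> Vd p r. f x \<in> I}" "v \<in> {x \<in> Vd p r. f x \<in> I}" for u v
    using that fD(2) Isub vadd_Vd[OF p0] by (auto simp: submod_def)
  show "vsmul p c u \<in> {x \<in> Vd p r. f x \<in> I}" if "c \<in> Zp p" "u \<in> {x \<in> Vd p r. f x \<in> I}" for c u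
    using that fD(4) Isub vsmul_Vd[OF p0] by (auto simp: submod_def)
  show "br' h u \<in> {x \<in> Vd p r. f x \<in> I}" if "h \<in> Vd p r" "u \<in> {x \<in> Vd p r. f x \<in> I}" for h u
    using that fD(1,3) br' Ibr by auto
qed auto

lemma lie_iso_simple_ve:
  assumes p0: "p > 0" and f: "lie_iso p br' (Vd p r) br S f"
    and br': "\<And>x y. x \<in> Vd p r \<Longrightarrow> y \<in> Vd p r \<Longrightarrow> br' x y \<in> Vd p r"
    and ve: "virt_endo p r br' (Vd p r) M \<phi>" and sim: "simple_ve p r br' (Vd p r) M \<phi>"
    and \<phi>: "\<And>x. x \<in> Vd p r \<Longrightarrow> \<psi> (f x) = f (\<phi> x)"
  shows "simple_ve p d br S (f ` M) \<psi>"
  unfolding simple_ve_def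
proof (intro allI impI notI)
  fix I assume I: "lie_ideal p d br S I \<and> I \<noteq> {vzero}" and inv: "phi_invariant S (f ` M) \<psi> I"
  have bij: "bij_betw f (Vd p r) S" using f by (simp add: lie_iso_def)
  have MV: "M \<subseteq> Vd p r" "\<phi> ` M \<subseteq> Vd p r" using ve by (auto simp: virt_endo_def subalg_def)
  define J where "J = {x \<in> Vd p r. f x \<in> I}"
  have "J \<noteq> {vzero}"
  proof
    assume J0: "J = {vzero}"
    obtain y where y: "y \<in> I" "y \<noteq> vzero" using I unfolding lie_ideal_def submod_def by auto
    then obtain x where x: "x \<in> Vd p r" "y = f x" using I bij unfolding bij_betw_def lie_ideal_def by auto
    then have "x \<in> J" using y(1) unfolding J_def by simp
    then show False using J0 x y(2) lie_iso_vzero[OF p0 f] by simp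
  qed
  moreover have "phi_invariant (Vd p r) M \<phi> J"
    unfolding phi_invariant_def
  proof (intro conjI allI subsetI)
    fix n x assume "x \<in> J"
    then show "x \<in> pow_dom (Vd p r) M \<phi> n"
      using pow_dom_bij[OF bij MV \<phi>] inv unfolding J_def phi_invariant_def by auto
  next
    fix y assume "y \<in> \<phi> ` J"
    then obtain x where x: "x \<in> J" "y = \<phi> x" by auto
    then have "f x \<in> pow_dom S (f ` M) \<psi> 1" using inv unfolding J_def phi_invariant_def by blast
    then have "x \<in> M" using pow_dom_bij[OF bij MV \<phi>, of x 1] x unfolding J_def by simp
    moreover have "\<psi> (f x) \<in> I" using inv x unfolding J_def phi_invariant_def by auto
    ultimately show "y \<in> J" using \<phi> MV x unfolding J_def by auto
  qed
  ultimately show False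
    using sim lie_iso_ideal_preimage[OF p0 f br'] I unfolding simple_ve_def J_def by blast
qed

lemma self_similar_lie_iso:
  assumes p0: "p > 0" and f: "lie_iso p br' (Vd p r) br S f" and S: "S \<subseteq> Vd p d"
    and br': "\<And>x y. x \<in> Vd p r \<Longrightarrow> y \<in> Vd p r \<Longrightarrow> br' x y \<in> Vd p r"
    and ss: "self_similar p r br' (Vd p r) k"
  shows "self_similar p d br S k"
proof -
  obtain M \<phi> where ve: "virt_endo p r br' (Vd p r) M \<phi>" and idx: "lat_index p (Vd p r) M = p ^ k"
    and sim: "simple_ve p r br' (Vd p r) M \<phi>"
    using ss unfolding self_similar_def by blast
  define \<psi> where "\<psi> = (\<lambda>x. f (\<phi> (inv_into (Vd p r) f x)))"
  have \<psi>: "\<psi> (f x) = f (\<phi> x)" if "x \<in> Vd p r" for x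
    using f that by (simp add: \<psi>_def lie_iso_def bij_betw_def)
  have "M \<subseteq> Vd p r" using ve by (simp add: virt_endo_def subalg_def)
  then have "lat_index p S (f ` M) = p ^ k" using lie_iso_index(1)[OF p0 f] idx by simp
  then show ?thesis
    unfolding self_similar_def
    using lie_iso_virt_endo[OF p0 f S ve \<psi>] lie_iso_simple_ve[OF p0 f br' ve sim \<psi>] by blast
qed

section \<open>The shift endomorphism\<close>

definition shift_dom :: "nat \<Rightarrow> nat \<Rightarrow> nat \<Rightarrow> nat \<Rightarrow> zvec set" where
  "shift_dom p r k j = {v \<in> Vd p r. v j k = 0}"

definition shift_endo :: "nat \<Rightarrow> nat \<Rightarrow> nat \<Rightarrow> nat \<Rightarrow> zvec \<Rightarrow> zvec" where
  "shift_endo p r k j v = (\<lambda>i. if i < j then v i else if Suc i < r then v (Suc i)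
      else if Suc i = r then zp_div_pow p k (v j) else zp_zero)"

lemma shift_dom_submod:
  assumes "p > 0" "j < r"
  shows "submod p r (shift_dom p r k j)"
  using vzero_Vd[OF assms(1)] vadd_Vd[OF assms(1)] vsmul_Vd[OF assms(1)]
  by (auto simp: submod_def shift_dom_def vzero_def zp_zero_def vadd_def zp_add_def vsmul_def zp_mul_def)

lemma shift_endo_Vd:
  assumes "p > 0" "v \<in> shift_dom p r k j"
  shows "shift_endo p r k j v \<in> Vd p r"
  using assms zp_div_pow_Zp[OF assms(1) Vd_Zp[OF assms(1)]]
  by (auto simp: shift_dom_def Vd_def shift_endo_def)

lemma shift_endo_vadd:
  assumes "p > 0" "u \<in> shift_dom p r k j" "v \<in> shift_dom p r k j"
  shows "shift_endo p r k j (vadd p u v) = vadd p (shift_endo p r k j u) (shift_endo p r k j v)"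
  using assms zp_div_pow_add[OF assms(1) Vd_Zp[OF assms(1)] _ Vd_Zp[OF assms(1)]]
  by (intro ext) (auto simp: shift_dom_def shift_endo_def vadd_def zp_add_zero zp_zero_Zp)

lemma shift_endo_vsmul:
  assumes "p > 0" "c \<in> Zp p" "v \<in> shift_dom p r k j"
  shows "shift_endo p r k j (vsmul p c v) = vsmul p c (shift_endo p r k j v)"
  using assms zp_div_pow_mul[OF assms(1) Vd_Zp[OF assms(1)]]
  by (intro ext) (auto simp: shift_dom_def shift_endo_def vsmul_def zp_mul_zero)

lemma quotient_kernel_bij:
  assumes "R = {(u, v). u \<in> A \<and> v \<in> A \<and> h u = h v}"
  shows "bij_betw (\<lambda>X. the_elem (h ` X)) (A // R) (h ` A)"
proof -
  have cls: "R `` {x} = {y \<in> A. h y = h x}" if "x \<in> A" for x using assms that by auto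
  have im: "h ` (R `` {x}) = {h x}" if "x \<in> A" for x using cls[OF that] that by auto
  have "inj_on (\<lambda>X. the_elem (h ` X)) (A // R)"
  proof (rule inj_onI)
    fix X Y assume "X \<in> A // R" "Y \<in> A // R" "the_elem (h ` X) = the_elem (h ` Y)"
    then obtain x y where "x \<in> A" "y \<in> A" "X = R `` {x}" "Y = R `` {y}" "h x = h y"
      unfolding quotient_def using im by auto
    then show "X = Y" using cls by auto
  qed
  moreover have "(\<lambda>X. the_elem (h ` X)) ` (A // R) = h ` A"
    unfolding quotient_def using im by (auto simp: image_iff)
  ultimately show ?thesis unfolding bij_betw_def by simp
qed

lemma shift_dom_index:
  assumes "p > 0" "j < r"
  shows "lat_index p (Vd p r) (shift_dom p r k j) = p ^ k"
    and "finite_index p (Vd p r) (shift_dom p r k j)"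
proof -
  let ?h = "\<lambda>v::zvec. v j k"
  have "vsub p u v \<in> shift_dom p r k j \<longleftrightarrow> u j k = v j k" if "u \<in> Vd p r" "v \<in> Vd p r" for u v
  proof -
    have "vsub p u v j k = (u j k - v j k) mod int p ^ k"
      by (simp add: vsub_def zp_add_def zp_neg_def mod_simps)
    moreover have "(u j k - v j k) mod int p ^ k = 0 \<longleftrightarrow> u j k mod int p ^ k = v j k mod int p ^ k"
      by (simp add: mod_eq_0_iff_dvd mod_eq_dvd_iff)
    then have "(u j k - v j k) mod int p ^ k = 0 \<longleftrightarrow> u j k = v j k"
      using Vd_mod[OF that(1), of j k] Vd_mod[OF that(2), of j k] by simp
    ultimately show ?thesis using vsub_Vd[OF assms(1) that] by (simp add: shift_dom_def)
  qed
  then have R: "{(u, v). u \<in> Vd p r \<and> v \<in> Vd p r \<and> vsub p u v \<in> shift_dom p r k j}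
      = {(u, v). u \<in> Vd p r \<and> v \<in> Vd p r \<and> ?h u = ?h v}" by auto
  have "?h ` Vd p r = {0..<int p ^ k}"
  proof
    show "?h ` Vd p r \<subseteq> {0..<int p ^ k}" using Zp_range Vd_Zp[OF assms(1)] by fastforce
    show "{0..<int p ^ k} \<subseteq> ?h ` Vd p r"
    proof
      fix z assume z: "z \<in> {0..<int p ^ k}"
      define e where "e = (\<lambda>i. if i = j then zp_int p z else zp_zero)"
      have "e \<in> Vd p r" using assms zp_int_Zp zp_zero_Zp unfolding e_def Vd_def by auto
      moreover have "?h e = z" using z unfolding e_def zp_int_def by simp
      ultimately show "z \<in> ?h ` Vd p r" by force
    qed
  qed
  then have b: "bij_betw (\<lambda>X. the_elem (?h ` X)) (Vd p r // {(u, v). u \<in> Vd p r \<and> v \<in> Vd p r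
      \<and> vsub p u v \<in> shift_dom p r k j}) {0..<int p ^ k}"
    using quotient_kernel_bij[OF R] by simp
  have "card {0..<int p ^ k} = p ^ k" by (simp add: nat_power_eq)
  then show "lat_index p (Vd p r) (shift_dom p r k j) = p ^ k"
    using bij_betw_same_card[OF b] by (simp add: lat_index_def)
  show "finite_index p (Vd p r) (shift_dom p r k j)"
    using bij_betw_finite[OF b] by (simp add: finite_index_def)
qed

lemma shift_endo_iter_below: "i < j \<Longrightarrow> (shift_endo p r k j ^^ t) v i = v i"
  by (induction t) (auto simp: shift_endo_def)

lemma shift_endo_iter:
  assumes "t \<le> r - j" "j \<le> i" "i < r"
  shows "(shift_endo p r k j ^^ t) v i =
    (if i + t < r then v (i + t) else zp_div_pow p k (v (i + t - (r - j))))"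
  using assms
proof (induction t arbitrary: i)
  case (Suc t)
  let ?w = "(shift_endo p r k j ^^ t) v"
  show ?case
  proof (cases "Suc i < r")
    case True
    then show ?thesis using Suc.IH[of "Suc i"] Suc.prems by (simp add: shift_endo_def)
  next
    case False
    then have r: "r = Suc i" and "j + t < r" using Suc.prems by linarith+
    then show ?thesis using Suc.IH[of j] Suc.prems by (simp add: shift_endo_def r add.commute)
  qed
qed simp

definition total_dom :: "zvec set \<Rightarrow> zvec set \<Rightarrow> (zvec \<Rightarrow> zvec) \<Rightarrow> zvec set" where
  "total_dom H M \<phi> = (\<Inter>n. pow_dom H M \<phi> n)"

lemma total_domD:
  assumes "v \<in> total_dom H M \<phi>"
  shows "v \<in> H" "v \<in> M" "\<phi> v \<in> total_dom H M \<phi>"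
proof -
  have v: "v \<in> pow_dom H M \<phi> n" for n using assms by (simp add: total_dom_def)
  show "v \<in> H" using v[of 0] by simp
  show "v \<in> M" using v[of 1] by simp
  show "\<phi> v \<in> total_dom H M \<phi>" using v[of "Suc _"] by (simp add: total_dom_def)
qed

lemma total_dom_funpow: "v \<in> total_dom H M \<phi> \<Longrightarrow> (\<phi> ^^ t) v \<in> total_dom H M \<phi>"
  by (induction t) (auto dest: total_domD(3))

lemma phi_invariant_subset_total_dom: "phi_invariant H M \<phi> I \<Longrightarrow> I \<subseteq> total_dom H M \<phi>"
  unfolding phi_invariant_def total_dom_def by blast

lemma shift_total_dom_coord_vanish:
  assumes "j < r"
  shows "\<forall>v\<in>total_dom (Vd p r) (shift_dom p r k j) (shift_endo p r k j). (\<forall>i<j. v i = zp_zero) \<longrightarrow>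
    (\<forall>i. j \<le> i \<and> i < r \<longrightarrow> v i (k * n) = 0)"
proof (induction n)
  case 0
  show ?case by (auto dest!: total_domD(1) simp: Vd_def Zp_at_0)
next
  case (Suc n)
  show ?case
  proof (intro ballI impI allI)
    let ?\<phi> = "shift_endo p r k j" and ?D = "total_dom (Vd p r) (shift_dom p r k j) (shift_endo p r k j)"
    fix v i assume vD: "v \<in> ?D" and low: "\<forall>i<j. v i = zp_zero" and i: "j \<le> i \<and> i < r"
    have Z: "v i \<in> Zp p" using total_domD(1)[OF vD] i by (auto simp: Vd_def)
    have "(?\<phi> ^^ (i - j)) v \<in> shift_dom p r k j" using total_domD(2)[OF total_dom_funpow[OF vD]] .
    moreover have "i - j \<le> r - j" using i by linarith
    ultimately have vik: "v i k = 0" using shift_endo_iter[of "i - j" r j j p k v] i by (simp add: shift_dom_def)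
    let ?w = "(?\<phi> ^^ (r - j)) v"
    have "\<not> i + (r - j) < r" using i by linarith
    then have "?w i = zp_div_pow p k (v i)" using shift_endo_iter[of "r - j" r j i p k v] i by simp
    moreover have "?w i (k * n) = 0"
    proof -
      have "\<forall>i<j. ?w i = zp_zero" using low shift_endo_iter_below by simp
      then show ?thesis using Suc.IH total_dom_funpow[OF vD, of "r - j"] i by blast
    qed
    ultimately have "v i (k * n + k) = 0" using zp_div_pow_eq[OF Z vik, of "k * n"] by simp
    then show "v i (k * Suc n) = 0" by (simp add: algebra_simps)
  qed
qed

lemma shift_total_dom_eq_vzero:
  assumes "j < r" "k \<ge> 1" "v \<in> total_dom (Vd p r) (shift_dom p r k j) (shift_endo p r k j)"
    and "\<forall>i<j. v i = zp_zero"
  shows "v = vzero"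
proof (rule ext)
  fix i
  have vV: "v \<in> Vd p r" using total_domD(1)[OF assms(3)] .
  show "v i = vzero i"
  proof (cases "j \<le> i \<and> i < r")
    case True
    have "v i m = 0" for m
    proof -
      have "v i m = v i (k * m) mod int p ^ m"
        using Zp_mod_le[of "v i" p m "k * m"] vV True assms(2) by (simp add: Vd_def)
      also have "v i (k * m) = 0" using shift_total_dom_coord_vanish[OF assms(1)] assms(3,4) True by blast
      finally show ?thesis by simp
    qed
    then show ?thesis by (auto simp: vzero_def zp_zero_def)
  qed (use assms(4) Vd_beyond[OF vV] in \<open>auto simp: vzero_def not_le\<close>)
qed

lemma self_similar_shift:
  assumes p0: "p > 0" and "j < r" "k \<ge> 1"
    and closed: "\<And>u v. u \<in> shift_dom p r k j \<Longrightarrow> v \<in> shift_dom p r k j \<Longrightarrow> br u v \<in> shift_dom p r k j"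
    and hom: "\<And>u v. u \<in> shift_dom p r k j \<Longrightarrow> v \<in> shift_dom p r k j \<Longrightarrow>
      shift_endo p r k j (br u v) = br (shift_endo p r k j u) (shift_endo p r k j v)"
    and ideal: "\<And>I. lie_ideal p r br (Vd p r) I \<Longrightarrow> I \<noteq> {vzero} \<Longrightarrow>
      \<exists>w\<in>I. w \<noteq> vzero \<and> (\<forall>i<j. w i = zp_zero)"
  shows "self_similar p r br (Vd p r) k"
proof -
  let ?M = "shift_dom p r k j" and ?\<phi> = "shift_endo p r k j"
  have "subalg p r br (Vd p r) ?M"
    using shift_dom_submod[OF p0 \<open>j < r\<close>] closed by (auto simp: subalg_def shift_dom_def)
  then have "virt_endo p r br (Vd p r) ?M ?\<phi>"
    unfolding virt_endo_def
    using shift_dom_index(2)[OF p0 \<open>j < r\<close>] shift_endo_Vd[OF p0] shift_endo_vadd[OF p0]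
      shift_endo_vsmul[OF p0] hom by auto
  moreover have "simple_ve p r br (Vd p r) ?M ?\<phi>"
    unfolding simple_ve_def
    using ideal phi_invariant_subset_total_dom shift_total_dom_eq_vzero[OF \<open>j < r\<close> \<open>k \<ge> 1\<close>]
    by blast
  ultimately show ?thesis
    unfolding self_similar_def using shift_dom_index(1)[OF p0 \<open>j < r\<close>] by blast
qed

section \<open>Self-similarity of the lattices L^r(c)\<close>

lemma Ld_br_Vd:
  assumes "p > 0" "c \<in> Zp p" "u \<in> Vd p r" "v \<in> Vd p r"
  shows "Ld_br p c u v \<in> Vd p r"
  using assms Vd_Zp[OF assms(1) assms(3)] Vd_Zp[OF assms(1) assms(4)] Vd_beyond[OF assms(3)]
    Vd_beyond[OF assms(4)]
  by (auto simp: Vd_def Ld_br_def zp_mul_Zp zp_add_Zp zp_neg_Zp zp_mul_zero zp_neg_zero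
      zp_add_zero zp_zero_Zp)

lemma Ld_br_eq_vzero:
  assumes "p > 0" "c = zp_zero \<or> r = 1" "u \<in> Vd p r" "v \<in> Vd p r"
  shows "Ld_br p c u v = vzero"
  using assms Vd_beyond[OF assms(3)] Vd_beyond[OF assms(4)]
  by (auto simp: Ld_br_def vzero_def zp_zero_mul zp_mul_zero zp_neg_zero zp_add_zero zp_zero_Zp)

definition unit_vec :: "nat \<Rightarrow> nat \<Rightarrow> zvec" where
  "unit_vec p j = (\<lambda>i. if i = j then zp_int p 1 else zp_zero)"

lemma unit_vec_Vd: "p > 0 \<Longrightarrow> j < r \<Longrightarrow> unit_vec p j \<in> Vd p r"
  by (auto simp: unit_vec_def Vd_def zp_int_Zp zp_zero_Zp)

lemma unit_vec_neq_vzero: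
  assumes "prime p"
  shows "unit_vec p j \<noteq> vzero"
proof
  assume "unit_vec p j = vzero"
  then have "unit_vec p j j 1 = vzero j 1" by simp
  then show False
    using prime_gt_1_nat[OF assms] by (simp add: unit_vec_def vzero_def zp_int_def zp_zero_def)
qed

lemma self_similar_abelian:
  assumes "p > 0" "r \<ge> 1" "k \<ge> 1"
    and br0: "\<And>x y. x \<in> Vd p r \<Longrightarrow> y \<in> Vd p r \<Longrightarrow> br x y = vzero"
  shows "self_similar p r br (Vd p r) k"
proof (rule self_similar_shift[of p 0])
  have "vzero \<in> shift_dom p r k 0" using vzero_Vd[OF assms(1)] by (simp add: shift_dom_def vzero_def zp_zero_def)
  moreover have "shift_endo p r k 0 vzero = vzero"
    by (simp add: shift_endo_def vzero_def zp_div_pow_def zp_zero_def fun_eq_iff)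
  ultimately show "br u v \<in> shift_dom p r k 0"
    and "shift_endo p r k 0 (br u v) = br (shift_endo p r k 0 u) (shift_endo p r k 0 v)"
    if "u \<in> shift_dom p r k 0" "v \<in> shift_dom p r k 0" for u v
    using that br0 shift_endo_Vd[OF assms(1)] by (auto simp: shift_dom_def)
  show "\<exists>w\<in>I. w \<noteq> vzero \<and> (\<forall>i<0. w i = zp_zero)" if "I \<noteq> {vzero}" "lie_ideal p r br (Vd p r) I" for I
    using that by (auto simp: lie_ideal_def submod_def)
qed (use assms in auto)

lemma shift_endo_Ld_br:
  assumes p0: "p > 0" and c: "c \<in> Zp p" and u: "u \<in> shift_dom p r k 1" and v: "v \<in> shift_dom p r k 1"
  shows "shift_endo p r k 1 (Ld_br p c u v) = Ld_br p c (shift_endo p r k 1 u) (shift_endo p r k 1 v)"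
proof (rule ext)
  fix i
  have uk: "u 1 k = 0" and vk: "v 1 k = 0" using u v by (auto simp: shift_dom_def)
  have Z: "u i' \<in> Zp p" "v i' \<in> Zp p" for i' using u v Vd_Zp[OF p0] by (auto simp: shift_dom_def)
  let ?A = "zp_mul p (u 0) (v 1)" and ?B = "zp_mul p (v 0) (u 1)"
  let ?X = "zp_add p ?A (zp_neg p ?B)"
  have "?A k = 0" "?B k = 0" "zp_neg p ?B k = 0"
    using uk vk by (simp_all add: zp_mul_def zp_neg_def)
  then have AB: "?A \<in> Zp p" "?B \<in> Zp p" "zp_neg p ?B \<in> Zp p" "?A k = 0" "?B k = 0" "zp_neg p ?B k = 0"
    using Z by (simp_all add: zp_mul_Zp[OF p0] zp_neg_Zp[OF p0])
  have X: "?X \<in> Zp p" "?X k = 0" using AB zp_add_Zp[OF p0 AB(1,3)] by (simp_all add: zp_add_def)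
  have "zp_div_pow p k (zp_mul p c ?X) = zp_mul p c
      (zp_add p (zp_mul p (u 0) (zp_div_pow p k (v 1))) (zp_neg p (zp_mul p (v 0) (zp_div_pow p k (u 1)))))"
    unfolding zp_div_pow_mul[OF p0 X c] zp_div_pow_add[OF p0 AB(1,4,3,6)] zp_div_pow_neg[OF p0 AB(2,5)]
      zp_div_pow_mul[OF p0 Z(2) vk Z(1)] zp_div_pow_mul[OF p0 Z(1) uk Z(2)] ..
  then show "shift_endo p r k 1 (Ld_br p c u v) i = Ld_br p c (shift_endo p r k 1 u) (shift_endo p r k 1 v) i"
    by (simp add: shift_endo_def Ld_br_def zp_mul_zero zp_neg_zero zp_add_zero zp_zero_Zp[OF p0])
qed

lemma lie_ideal_Ld_br_coord0:
  assumes pr: "prime p" and "r \<ge> 2" and c: "c \<in> Zp p" "c \<noteq> zp_zero"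
    and I: "lie_ideal p r (Ld_br p c) (Vd p r) I" "I \<noteq> {vzero}"
  shows "\<exists>w\<in>I. w \<noteq> vzero \<and> w 0 = zp_zero"
proof -
  have p0: "p > 0" using pr prime_gt_0_nat by blast
  have Ibr: "\<forall>h\<in>Vd p r. \<forall>x\<in>I. Ld_br p c h x \<in> I" and IV: "I \<subseteq> Vd p r"
    using I(1) unfolding lie_ideal_def by auto
  obtain u where u: "u \<in> I" "u \<noteq> vzero" using I unfolding lie_ideal_def submod_def by auto
  have Z: "u i \<in> Zp p" for i using Vd_Zp[OF p0] u IV by auto
  have w0: "Ld_br p c h u 0 = zp_zero" for h by (simp add: Ld_br_def)
  show ?thesis
  proof (cases "\<exists>i\<ge>1. u i \<noteq> zp_zero")
    case True
    then obtain i where i: "i \<ge> 1" "u i \<noteq> zp_zero" by auto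
    have "Ld_br p c (unit_vec p 0) u i = zp_mul p c (u i)"
      using i by (simp add: Ld_br_def unit_vec_def zp_int_1_mul[OF Z] zp_mul_zero zp_neg_zero zp_add_zero[OF Z])
    moreover have "zp_mul p c (u i) \<noteq> zp_zero" using zp_mul_neq_zero[OF pr c(1) Z c(2) i(2)] .
    ultimately have "Ld_br p c (unit_vec p 0) u \<noteq> vzero" by (auto simp: vzero_def)
    then show ?thesis using Ibr u unit_vec_Vd[OF p0, of 0 r] \<open>r \<ge> 2\<close> w0 by auto
  next
    case False
    then have "u 0 \<noteq> zp_zero" using u(2) by (metis less_one not_le vzero_def ext)
    have "Ld_br p c (unit_vec p 1) u 1 = zp_mul p c (zp_neg p (u 0))"
      using False by (simp add: Ld_br_def unit_vec_def zp_mul_int_1[OF Z] zp_zero_mul zp_zero_add[OF zp_neg_Zp[OF p0 Z]])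
    moreover have "zp_mul p c (zp_neg p (u 0)) \<noteq> zp_zero"
      using zp_mul_neq_zero[OF pr c(1) zp_neg_Zp[OF p0 Z] c(2)] zp_neg_eq_zero_iff[OF Z] \<open>u 0 \<noteq> zp_zero\<close>
      by blast
    ultimately have "Ld_br p c (unit_vec p 1) u \<noteq> vzero" by (auto simp: vzero_def)
    then show ?thesis using Ibr u unit_vec_Vd[OF p0, of 1 r] \<open>r \<ge> 2\<close> w0 by auto
  qed
qed

lemma self_similar_Ld_br:
  assumes pr: "prime p" and "r \<ge> 1" "k \<ge> 1" and c: "c \<in> Zp p"
  shows "self_similar p r (Ld_br p c) (Vd p r) k"
proof -
  have p0: "p > 0" using pr prime_gt_0_nat by blast
  show ?thesis
  proof (cases "c = zp_zero \<or> r = 1")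
    case True
    then show ?thesis using self_similar_abelian[OF p0 assms(2,3)] Ld_br_eq_vzero[OF p0] by blast
  next
    case False
    then have "r \<ge> 2" "c \<noteq> zp_zero" using \<open>r \<ge> 1\<close> by auto
    have "Ld_br p c u v \<in> shift_dom p r k 1" if "u \<in> shift_dom p r k 1" "v \<in> shift_dom p r k 1" for u v
      using that Ld_br_Vd[OF p0 c] by (auto simp: shift_dom_def Ld_br_def zp_mul_def zp_add_def zp_neg_def)
    then show ?thesis
      using self_similar_shift[OF p0 _ \<open>k \<ge> 1\<close>, of 1] shift_endo_Ld_br[OF p0 c]
        lie_ideal_Ld_br_coord0[OF pr \<open>r \<ge> 2\<close> c \<open>c \<noteq> zp_zero\<close>] \<open>r \<ge> 2\<close> by fastforce
  qed
qed

section \<open>Subalgebras of L^d(a)\<close>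

lemma lincomb_coord_0:
  assumes "length bs \<ge> 1" "\<And>t. 1 \<le> t \<Longrightarrow> t < length bs \<Longrightarrow> (bs ! t) 0 = zp_zero"
  shows "lincomb p bs z 0 n = z 0 n * (bs ! 0) 0 n mod int p ^ n"
proof -
  have "(\<Sum>t<length bs. z t n * (bs ! t) 0 n) = (\<Sum>t<length bs. if t = 0 then z 0 n * (bs ! 0) 0 n else 0)"
    by (rule sum.cong) (auto simp: assms(2) zp_zero_def)
  moreover have "bs \<noteq> []" using assms(1) by auto
  ultimately show ?thesis by (simp add: lincomb_def)
qed

lemma lincomb_Ld_br_coord:
  assumes "1 \<le> i"
  shows "lincomb p bs (Ld_br p c x y) i n = c n * (x 0 n * (\<Sum>t<length bs. y t n * (bs ! t) i n)
    - y 0 n * (\<Sum>t<length bs. x t n * (bs ! t) i n)) mod int p ^ n"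
proof -
  let ?P = "int p ^ n" and ?b = "\<lambda>t. (bs ! t) i n"
  let ?g = "\<lambda>t. c n * (x 0 n * y t n - y 0 n * x t n) * ?b t"
  have "(\<Sum>t<length bs. Ld_br p c x y t n * ?b t) mod ?P = (\<Sum>t<length bs. ?g t) mod ?P"
  proof (rule sum_mod_cong)
    fix t
    show "Ld_br p c x y t n * ?b t mod ?P = ?g t mod ?P"
    proof (cases "t = 0")
      case False
      then have "Ld_br p c x y t n * ?b t mod ?P = c n * (x 0 n * y t n + - (y 0 n * x t n)) * ?b t mod ?P"
        by (simp add: Ld_br_def zp_mul_def zp_add_def zp_neg_def mod_simps)
      then show ?thesis by (simp add: algebra_simps)
    qed (simp add: Ld_br_def zp_zero_def)
  qed
  also have "(\<Sum>t<length bs. ?g t)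
      = c n * (x 0 n * (\<Sum>t<length bs. y t n * ?b t) - y 0 n * (\<Sum>t<length bs. x t n * ?b t))"
    by (simp add: sum_distrib_left sum_subtractf algebra_simps)
  finally show ?thesis by (simp add: lincomb_def)
qed

lemma lincomb_Ld_br:
  assumes r1: "length bs \<ge> 1"
    and tail: "\<And>t. 1 \<le> t \<Longrightarrow> t < length bs \<Longrightarrow> (bs ! t) 0 = zp_zero"
  shows "lincomb p bs (Ld_br p (zp_mul p a ((bs ! 0) 0)) x y) = Ld_br p a (lincomb p bs x) (lincomb p bs y)"
proof (intro ext)
  fix i n
  let ?P = "int p ^ n" and ?s = "(bs ! 0) 0 n"
  let ?X = "\<Sum>t<length bs. x t n * (bs ! t) i n" and ?Y = "\<Sum>t<length bs. y t n * (bs ! t) i n"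
  note X0 = lincomb_coord_0[OF r1 tail]
  show "lincomb p bs (Ld_br p (zp_mul p a ((bs ! 0) 0)) x y) i n = Ld_br p a (lincomb p bs x) (lincomb p bs y) i n"
  proof (cases "i = 0")
    case True
    then show ?thesis by (simp add: X0 Ld_br_def zp_zero_def)
  next
    case False
    then have i: "1 \<le> i" by simp
    have "lincomb p bs (Ld_br p (zp_mul p a ((bs ! 0) 0)) x y) i n = a n * ?s * (x 0 n * ?Y - y 0 n * ?X) mod ?P"
      unfolding lincomb_Ld_br_coord[OF i] by (simp add: zp_mul_def mod_simps)
    moreover have "Ld_br p a (lincomb p bs x) (lincomb p bs y) i n
        = a n * (((x 0 n * ?s mod ?P) * (?Y mod ?P) mod ?P + - ((y 0 n * ?s mod ?P) * (?X mod ?P) mod ?P) mod ?P)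
          mod ?P) mod ?P"
      using i by (simp only: Ld_br_def zp_mul_def zp_add_def zp_neg_def if_True, simp only: X0,
          simp only: lincomb_def)
    moreover have "\<dots> = a n * ?s * (x 0 n * ?Y - y 0 n * ?X) mod ?P"
      by (simp add: mod_simps) (simp add: algebra_simps)
    ultimately show ?thesis by simp
  qed
qed

lemma self_similar_subalg:
  assumes pr: "prime p" and k: "k \<ge> 1" and a: "a \<in> Zp p"
    and S: "subalg p d (Ld_br p a) (Vd p d) S" and S0: "S \<noteq> {vzero}"
  shows "self_similar p d (Ld_br p a) S k"
proof -
  have p0: "p > 0" using pr prime_gt_0_nat by blast
  have Ssub: "submod p d S" and SV: "S \<subseteq> Vd p d" using S unfolding subalg_def submod_def by auto
  obtain bs where bs: "basis_of p bs S" and tail: "\<forall>t. 1 \<le> t \<and> t < length bs \<longrightarrow> (bs ! t) 0 = zp_zero"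
    using submod_echelon_basis[OF pr le0 Ssub] by blast
  have bij: "bij_betw (lincomb p bs) (Vd p (length bs)) S" using bs by (simp add: basis_of_def)
  have r1: "length bs \<ge> 1"
  proof (rule ccontr)
    assume "\<not> length bs \<ge> 1"
    then have "bs = []" by (cases bs) auto
    then have "S = {vzero}" using bij by (simp add: bij_betw_def Vd_0 lincomb_Nil)
    then show False using S0 by simp
  qed
  then have "bs ! 0 \<in> set bs" by (cases bs) auto
  then have "bs ! 0 \<in> Vd p d" using bs SV by (auto simp: basis_of_def)
  then have c: "zp_mul p a ((bs ! 0) 0) \<in> Zp p" using zp_mul_Zp[OF p0 a Vd_Zp[OF p0]] by blast
  have "lie_iso p (Ld_br p (zp_mul p a ((bs ! 0) 0))) (Vd p (length bs)) (Ld_br p a) S (lincomb p bs)"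
    using bij lincomb_vadd lincomb_vsmul lincomb_Ld_br[OF r1] tail by (simp add: lie_iso_def)
  then show ?thesis
    using SV by (rule self_similar_lie_iso[OF p0]) (use Ld_br_Vd[OF p0 c] self_similar_Ld_br[OF pr r1 k c] in auto)
qed

theorem proposition1p40:
  fixes p d k :: nat and a :: zp
  assumes "prime p" and "d \<ge> 2" and "k \<ge> 1" and "a \<in> Zp p"
  shows "self_similar p d (Ld_br p a) (Vd p d) k
       \<and> strongly_hered_self_similar p d (Ld_br p a) (Vd p d) k"
proof -
  have p0: "p > 0" using assms(1) prime_gt_0_nat by blast
  have "subalg p d (Ld_br p a) (Vd p d) (Vd p d)"
    using vzero_Vd[OF p0] vadd_Vd[OF p0] vsmul_Vd[OF p0] Ld_br_Vd[OF p0 assms(4)]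
    by (auto simp: subalg_def submod_def)
  moreover have "Vd p d \<noteq> {vzero}"
    using unit_vec_Vd[OF p0, of 0 d] unit_vec_neq_vzero[OF assms(1), of 0] assms(2) by auto
  ultimately have "self_similar p d (Ld_br p a) (Vd p d) k"
    by (rule self_similar_subalg[OF assms(1,3,4)])
  then show ?thesis
    unfolding strongly_hered_self_similar_def using self_similar_subalg[OF assms(1,3,4)] by blast
qed

end
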